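(* Let $0\le\epsilon<1/8$, let $v\in\mathbb R^n$ with $\|v\|=1$, and let $Q^*\subseteq[n]$ with $1\le|Q^*|\le n/2$. If $\left\|\bar{\mathbf 1}_{Q^*}/\|\bar{\mathbf 1}_{Q^*}\| - v\right\|^2\le\epsilon$, then, with $Q=\{i\in[n]: v_i\ge \frac{1}{2\sqrt{2|Q^*|}}\}$, $$|Q\,\triangle\,Q^*| = \|\mathbf 1_Q-\mathbf 1_{Q^*}\|^2 \le \frac{8\epsilon|Q|}{1-8\epsilon}.$$
   Context: $\mathbf 1_Q\in\{0,1\}^n$ is the indicator vector of $Q$, $\bar x=x-\frac{\langle x,\mathbf1\rangle}{n}\mathbf1$ for $x\in\mathbb R^n$, $\|\cdot\|$ is the Euclidean norm, and $\triangle$ is symmetric difference. *)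

theory Defs
  imports Complex_Main
begin

text \<open>Vectors in R^n are functions nat => real, considered on the index set [n] = {1..n}.\<close>

definition indvec :: "nat set \<Rightarrow> nat \<Rightarrow> real" where
  "indvec Q i = (if i \<in> Q then 1 else 0)"

definition center :: "nat \<Rightarrow> (nat \<Rightarrow> real) \<Rightarrow> nat \<Rightarrow> real" where
  "center n x i = x i - (\<Sum>j\<in>{1..n}. x j) / real n"

definition vnorm :: "nat \<Rightarrow> (nat \<Rightarrow> real) \<Rightarrow> real" where
  "vnorm n x = sqrt (\<Sum>i\<in>{1..n}. (x i)\<^sup>2)"

end

theory Submission
  imports Defs
begin

text \<open>Write \<open>k = |Q*|\<close> and \<open>a = k/n \<le> 1/2\<close>. The normalised centred indicator equals
\<open>(1 - a)/\<surd>(k(1 - a)) \<ge> 1/\<surd>(2k)\<close> on \<open>Q*\<close> and is non-positive off it, so the threshold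
\<open>t = 1/(2\<surd>(2k))\<close> sits at distance at least \<open>t\<close> from both values. Every index of \<open>Q \<triangle> Q*\<close>
therefore contributes at least \<open>t\<^sup>2 = 1/(8k)\<close> to the squared distance \<open>\<le> \<epsilon>\<close>, giving
\<open>|Q \<triangle> Q*| \<le> 8\<epsilon>k \<le> 8\<epsilon>(|Q| + |Q \<triangle> Q*|)\<close>, which rearranges to the claim.\<close>

lemma vnorm_power2: "(vnorm n x)\<^sup>2 = (\<Sum>i\<in>{1..n}. (x i)\<^sup>2)"
  unfolding vnorm_def by (simp add: sum_nonneg)

lemma sum_indvec:
  assumes "finite S" "Q \<subseteq> S"
  shows "(\<Sum>i\<in>S. indvec Q i) = real (card Q)"
proof -
  have "(\<Sum>i\<in>S. indvec Q i) = real (card (S \<inter> Q))"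
    by (simp add: indvec_def sum.If_cases assms(1))
  with assms(2) show ?thesis by (simp add: Int_absorb1)
qed

lemma power2_indvec_diff: "(indvec A i - indvec B i)\<^sup>2 = indvec ((A - B) \<union> (B - A)) i"
  by (simp add: indvec_def)

lemma vnorm_indvec_diff_power2:
  assumes "A \<subseteq> {1..n}" "B \<subseteq> {1..n}"
  shows "(vnorm n (\<lambda>i. indvec A i - indvec B i))\<^sup>2 = real (card ((A - B) \<union> (B - A)))"
proof -
  have "(A - B) \<union> (B - A) \<subseteq> {1..n}" using assms by auto
  then show ?thesis
    by (simp add: vnorm_power2 power2_indvec_diff sum_indvec[OF finite_atLeastAtMost])
qed

lemma center_indvec:
  assumes "Q \<subseteq> {1..n}"
  shows "center n (indvec Q) i = indvec Q i - real (card Q) / real n"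
  using assms by (simp add: center_def sum_indvec)

lemma vnorm_center_indvec:
  assumes "Q \<subseteq> {1..n}"
  shows "vnorm n (center n (indvec Q)) = sqrt (real (card Q) * (1 - real (card Q) / real n))"
proof -
  define k where "k = real (card Q)"
  define a where "a = k / real n"
  have na: "real n * a\<^sup>2 = k * a"
  proof (cases "n = 0")
    case True
    with assms have "k = 0" unfolding k_def by auto
    then show ?thesis by (simp add: a_def)
  next
    case False
    then show ?thesis unfolding a_def by (simp add: power2_eq_square)
  qed
  have "(\<Sum>i\<in>{1..n}. (indvec Q i - a)\<^sup>2) = (\<Sum>i\<in>{1..n}. indvec Q i - 2 * a * indvec Q i + a\<^sup>2)"
    by (rule sum.cong) (auto simp: indvec_def power2_eq_square algebra_simps)
  also have "\<dots> = k - 2 * a * k + real n * a\<^sup>2"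
    using assms by (simp add: sum.distrib sum_subtractf sum_distrib_left[symmetric] sum_indvec k_def)
  also have "\<dots> = k * (1 - a)"
    by (simp add: na algebra_simps)
  finally show ?thesis
    using assms by (simp add: vnorm_def center_indvec k_def a_def)
qed

lemma vnorm_center_indvec_le:
  assumes "Q \<subseteq> {1..n}" "real (card Q) \<le> real n / 2"
  shows "vnorm n (center n (indvec Q)) \<le> (1 - real (card Q) / real n) * sqrt (2 * real (card Q))"
proof -
  define k where "k = real (card Q)"
  define a where "a = k / real n"
  have a_le: "a \<le> 1/2"
    using assms(2) unfolding a_def k_def by (cases "n = 0") (simp_all add: divide_simps)
  have "k * (1 - a) * 1 \<le> k * (1 - a) * (2 * (1 - a))"
    using a_le by (intro mult_left_mono) (auto simp: k_def)
  then have "sqrt (k * (1 - a)) \<le> sqrt ((1 - a)\<^sup>2 * (2 * k))"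
    by (simp add: power2_eq_square algebra_simps)
  also have "\<dots> = (1 - a) * sqrt (2 * k)"
    using a_le by (simp add: real_sqrt_mult)
  finally show ?thesis
    using assms(1) by (simp add: vnorm_center_indvec k_def a_def)
qed

lemma normalized_center_indvec_ge:
  assumes "Q \<subseteq> {1..n}" "1 \<le> card Q" "real (card Q) \<le> real n / 2" "i \<in> Q"
  shows "1 / sqrt (2 * real (card Q)) \<le> center n (indvec Q) i / vnorm n (center n (indvec Q))"
proof -
  define k where "k = real (card Q)"
  define a where "a = k / real n"
  define N where "N = vnorm n (center n (indvec Q))"
  have "a \<le> 1/2"
    using assms(2,3) unfolding a_def k_def by (simp add: divide_simps)
  moreover have "k \<ge> 1" using assms(2) by (simp add: k_def)
  ultimately have "k * (1 - a) > 0" by simp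
  then have "N > 0"
    using assms(1) by (simp add: N_def vnorm_center_indvec k_def a_def)
  moreover have "N \<le> (1 - a) * sqrt (2 * k)"
    using vnorm_center_indvec_le[OF assms(1,3)] by (simp add: N_def k_def a_def)
  moreover have "sqrt (2 * k) > 0"
    using assms(2) by (simp add: k_def)
  ultimately have "1 / sqrt (2 * k) \<le> (1 - a) / N"
    by (simp add: divide_simps mult.commute)
  with assms show ?thesis
    by (simp add: center_indvec indvec_def N_def k_def a_def)
qed

lemma normalized_center_indvec_nonpos:
  assumes "Q \<subseteq> {1..n}" "i \<notin> Q"
  shows "center n (indvec Q) i / vnorm n (center n (indvec Q)) \<le> 0"
proof -
  have "center n (indvec Q) i \<le> 0"
    using assms by (simp add: center_indvec indvec_def)
  moreover have "vnorm n (center n (indvec Q)) \<ge> 0"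
    by (simp add: vnorm_def sum_nonneg)
  ultimately show ?thesis
    by (rule divide_nonpos_nonneg)
qed

text \<open>A value above \<open>2t\<close> or below \<open>0\<close>, compared against the threshold \<open>t\<close> on the wrong side,
is off by at least \<open>t\<close>.\<close>

lemma threshold_error_ge:
  fixes t x y :: real
  assumes "0 < t" "p \<Longrightarrow> 2 * t \<le> x" "\<not> p \<Longrightarrow> x \<le> 0" "p \<noteq> (t \<le> y)"
  shows "t\<^sup>2 \<le> (x - y)\<^sup>2"
proof -
  have "t \<le> \<bar>x - y\<bar>"
    using assms by (cases p) auto
  then show ?thesis
    using assms(1) by (metis abs_of_pos power2_abs power_mono abs_ge_zero order.trans less_imp_le)
qed

lemma card_mult_le_sum:
  fixes f :: "'a \<Rightarrow> real"
  assumes "finite S" "D \<subseteq> S" "\<And>i. i \<in> D \<Longrightarrow> c \<le> f i" "\<And>i. i \<in> S \<Longrightarrow> 0 \<le> f i"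
  shows "real (card D) * c \<le> sum f S"
proof -
  have "real (card D) * c \<le> sum f D"
    using sum_mono[of D "\<lambda>_. c" f] assms(3) by simp
  also have "\<dots> \<le> sum f S"
    using assms by (intro sum_mono2) auto
  finally show ?thesis .
qed

lemma le_divide_one_minus_of_le_mult_add:
  fixes c d q :: real
  assumes "0 \<le> c" "c < 1" "d \<le> c * (q + d)"
  shows "d \<le> c * q / (1 - c)"
  using assms by (simp add: pos_le_divide_eq algebra_simps)

lemma card_le_card_add_card_sym_diff:
  assumes "finite A" "finite B"
  shows "card B \<le> card A + card ((A - B) \<union> (B - A))"
proof -
  have "card B \<le> card (A \<union> ((A - B) \<union> (B - A)))"
    using assms by (intro card_mono) auto
  also have "\<dots> \<le> card A + card ((A - B) \<union> (B - A))"
    by (rule card_Un_le)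
  finally show ?thesis .
qed

theorem lemma6p3:
  fixes n :: nat and \<epsilon> :: real and v :: "nat \<Rightarrow> real" and Qs :: "nat set"
  assumes eps: "0 \<le> \<epsilon>" "\<epsilon> < 1/8"
    and vn: "vnorm n v = 1"
    and Qs_sub: "Qs \<subseteq> {1..n}"
    and Qs_card: "1 \<le> card Qs" "real (card Qs) \<le> real n / 2"
    and close: "(vnorm n (\<lambda>i. center n (indvec Qs) i / vnorm n (center n (indvec Qs)) - v i))\<^sup>2 \<le> \<epsilon>"
  shows "let Q = {i \<in> {1..n}. v i \<ge> 1 / (2 * sqrt (2 * real (card Qs)))} in
           real (card ((Q - Qs) \<union> (Qs - Q))) = (vnorm n (\<lambda>i. indvec Q i - indvec Qs i))\<^sup>2
         \<and> real (card ((Q - Qs) \<union> (Qs - Q))) \<le> 8 * \<epsilon> * real (card Q) / (1 - 8 * \<epsilon>)"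
proof -
  define k where "k = real (card Qs)"
  define t where "t = 1 / (2 * sqrt (2 * k))"
  define Q where "Q = {i \<in> {1..n}. v i \<ge> t}"
  define D where "D = (Q - Qs) \<union> (Qs - Q)"
  define x where "x i = center n (indvec Qs) i / vnorm n (center n (indvec Qs))" for i
  have k_pos: "k \<ge> 1" using Qs_card(1) by (simp add: k_def)
  have Q_sub: "Q \<subseteq> {1..n}" by (auto simp: Q_def)
  have D_sub: "D \<subseteq> {1..n}" using Q_sub Qs_sub by (auto simp: D_def)
  have "t\<^sup>2 \<le> (x i - v i)\<^sup>2" if "i \<in> D" for i
    using that k_pos Qs_sub Qs_card
    by (intro threshold_error_ge[where p = "i \<in> Qs"])
       (auto simp: t_def x_def k_def D_def Q_def normalized_center_indvec_ge normalized_center_indvec_nonpos)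
  then have "real (card D) * t\<^sup>2 \<le> (\<Sum>i\<in>{1..n}. (x i - v i)\<^sup>2)"
    by (intro card_mult_le_sum[OF _ D_sub]) auto
  also have "\<dots> \<le> \<epsilon>"
    using close by (simp add: vnorm_power2 x_def)
  finally have "real (card D) * t\<^sup>2 \<le> \<epsilon>" .
  moreover have "t\<^sup>2 = 1 / (8 * k)"
    using k_pos by (simp add: t_def power2_eq_square power_divide)
  ultimately have D_le: "real (card D) \<le> 8 * \<epsilon> * k"
    using k_pos by (simp add: divide_simps algebra_simps)
  have "card Qs \<le> card Q + card D"
    unfolding D_def using Q_sub Qs_sub
    by (intro card_le_card_add_card_sym_diff) (auto intro: finite_subset)
  then have "real (card D) \<le> 8 * \<epsilon> * (real (card Q) + real (card D))"
    using D_le eps(1) unfolding k_def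
    by (smt (verit) mult_left_mono of_nat_add of_nat_mono)
  then have "real (card D) \<le> 8 * \<epsilon> * real (card Q) / (1 - 8 * \<epsilon>)"
    using eps by (intro le_divide_one_minus_of_le_mult_add) auto
  moreover have "real (card D) = (vnorm n (\<lambda>i. indvec Q i - indvec Qs i))\<^sup>2"
    using vnorm_indvec_diff_power2[OF Q_sub Qs_sub] by (simp add: D_def)
  ultimately show ?thesis by (simp add: Let_def Q_def D_def t_def k_def)
qed

end
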